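(* Let $p_1<\dots<p_m$ be real numbers with $m\ge3$, let $M=\max_{i,j}|p_i-p_j|$, and define $M_0^2=\sum_{1\le i<j\le m}(p_j-p_i)^2$ and $M_{k+1}^2=\big(\sum_{1\le i<j\le m}\frac{1}{(p_i-p_j)^2-M_{k}^2}\big)^{-1}+M_{k}^2$ for $k\ge0$. Then for every $k\ge0$, $$0<\frac{2}{m(m-1)}\Big(1-\frac{M^2}{M_k^2}\Big)<1-\frac{M_{k+1}^2}{M_k^2}<1-\frac{M^2}{M_k^2}.$$ *)

theory Defs
  imports Complex_Main
begin

text \<open>Points p 0 < ... < p (m-1) (0-indexed). Msq p m k is M_k^2.\<close>

fun Msq :: "(nat \<Rightarrow> real) \<Rightarrow> nat \<Rightarrow> nat \<Rightarrow> real" where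
  "Msq p m 0 = (\<Sum>j<m. \<Sum>i<j. (p j - p i)^2)"
| "Msq p m (Suc k) =
     inverse (\<Sum>j<m. \<Sum>i<j. 1 / ((p i - p j)^2 - Msq p m k)) + Msq p m k"

definition maxdist :: "(nat \<Rightarrow> real) \<Rightarrow> nat \<Rightarrow> real" where
  "maxdist p m = Max {\<bar>p i - p j\<bar> | i j. i < m \<and> j < m}"

end

theory Submission
  imports Defs
begin

text \<open>Write \<open>c = M\<^sup>2\<close> and \<open>g\<close> for the squared gaps, so that \<open>M\<^sub>k\<^sub>+\<^sub>1\<^sup>2 = x - 1/T\<close> with
  \<open>x = M\<^sub>k\<^sup>2\<close> and \<open>T = \<Sum> 1/(x - g)\<close>. The gap \<open>1 - M\<^sub>k\<^sub>+\<^sub>1\<^sup>2/M\<^sub>k\<^sup>2\<close> equals \<open>1/(x T)\<close>, and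
  both bounds reduce to \<open>1 < T (x - c) < N\<close> for the number \<open>N = m(m-1)/2\<close> of pairs:
  each of the \<open>N\<close> summands of \<open>T (x - c)\<close> lies in \<open>(0,1]\<close>, one of them equals \<open>1\<close>
  (the pair realising the diameter) and one is smaller (a pair not realising it, which
  exists as \<open>m \<ge> 3\<close>). The step also keeps \<open>x > c\<close>, so an induction on \<open>k\<close> applies.\<close>

lemma sum_inverse_gaps_bounds:
  fixes g :: "'a \<Rightarrow> real"
  assumes fin: "finite P" and le: "\<And>z. z \<in> P \<Longrightarrow> g z \<le> c"
    and a: "a \<in> P" "g a = c" and b: "b \<in> P" "g b < c" and x: "c < x"
  shows "1 / (x - c) < (\<Sum>z\<in>P. 1 / (x - g z))"
    and "(\<Sum>z\<in>P. 1 / (x - g z)) * (x - c) < real (card P)"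
proof -
  have pos: "0 < 1 / (x - g z)" if "z \<in> P" for z
    using le[OF that] x by simp
  have "(\<Sum>z\<in>P. 1 / (x - g z)) = 1 / (x - g a) + (\<Sum>z\<in>P - {a}. 1 / (x - g z))"
    using fin a by (simp add: sum.remove)
  moreover have "0 < (\<Sum>z\<in>P - {a}. 1 / (x - g z))"
    using fin b a pos by (intro sum_pos2[where i = b]) (auto intro: less_imp_le)
  ultimately show "1 / (x - c) < (\<Sum>z\<in>P. 1 / (x - g z))"
    using a by simp
  have "(\<Sum>z\<in>P. 1 / (x - g z)) * (x - c) = (\<Sum>z\<in>P. (x - c) / (x - g z))"
    by (simp add: sum_distrib_right)
  also have "\<dots> < (\<Sum>z\<in>P. 1)"
  proof (rule sum_strict_mono_ex1[OF fin])
    show "\<forall>z\<in>P. (x - c) / (x - g z) \<le> 1"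
      using le x by (auto simp: divide_le_eq_1 dest!: le)
    show "\<exists>z\<in>P. (x - c) / (x - g z) < 1"
      using b x by (intro bexI[of _ b]) (auto simp: divide_less_eq_1)
  qed
  finally show "(\<Sum>z\<in>P. 1 / (x - g z)) * (x - c) < real (card P)"
    by simp
qed

lemma inverse_gap_step_bounds:
  fixes g :: "'a \<Rightarrow> real"
  assumes fin: "finite P" and le: "\<And>z. z \<in> P \<Longrightarrow> g z \<le> c"
    and a: "a \<in> P" "g a = c" and b: "b \<in> P" "g b < c"
    and c: "0 \<le> c" and x: "c < x"
  defines "y \<equiv> x - 1 / (\<Sum>z\<in>P. 1 / (x - g z))"
  shows "c < y"
    and "(1 - c / x) / real (card P) < 1 - y / x"
    and "1 - y / x < 1 - c / x"
proof -
  define T where "T = (\<Sum>z\<in>P. 1 / (x - g z))"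
  have T_gt: "1 / (x - c) < T" and upper: "T * (x - c) < real (card P)"
    using sum_inverse_gaps_bounds[OF fin le a b x] unfolding T_def by simp_all
  have lower: "1 < T * (x - c)"
    using T_gt x by (simp add: field_simps)
  have x_pos: "0 < x" and T_pos: "0 < T"
    using c x T_gt by (auto intro: less_trans[of 0 "1 / (x - c)"])
  have gap: "1 - y / x = 1 / (x * T)"
    using x_pos T_pos unfolding y_def T_def[symmetric] by (simp add: field_simps)
  show "c < y"
    using lower T_pos unfolding y_def T_def[symmetric] by (simp add: field_simps)
  have card_pos: "0 < real (card P)"
    using lower upper by linarith
  have "x * (T * (x - c)) < x * real (card P)"
    using upper x_pos by simp
  then show "(1 - c / x) / real (card P) < 1 - y / x"
    using x_pos T_pos card_pos unfolding gap by (simp add: field_simps)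
  show "1 - y / x < 1 - c / x"
    using lower x_pos T_pos unfolding gap by (simp add: field_simps)
qed

definition pairs :: "nat \<Rightarrow> (nat \<times> nat) set" where
  "pairs m = Sigma {..<m} (\<lambda>j. {..<j})"

lemma finite_pairs: "finite (pairs m)"
  by (simp add: pairs_def)

lemma sum_pairs: "(\<Sum>j<m. \<Sum>i<j. f j i) = (\<Sum>(j, i)\<in>pairs m. f j i)"
  by (simp add: pairs_def sum.Sigma)

lemma real_card_pairs: "real (card (pairs m)) = real m * (real m - 1) / 2"
proof -
  have "real (card (pairs m)) = (\<Sum>j<m. real j)"
    by (simp add: pairs_def card_SigmaI)
  also have "\<dots> = real m * (real m - 1) / 2"
    by (induction m) (auto simp: field_simps)
  finally show ?thesis .
qed

definition sq_gap :: "(nat \<Rightarrow> real) \<Rightarrow> nat \<times> nat \<Rightarrow> real" where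
  "sq_gap p = (\<lambda>(j, i). (p j - p i)^2)"

lemma Msq_0_eq: "Msq p m 0 = (\<Sum>z\<in>pairs m. sq_gap p z)"
  by (simp add: sum_pairs sq_gap_def)

lemma Msq_Suc_eq:
  "Msq p m (Suc k) = Msq p m k - 1 / (\<Sum>z\<in>pairs m. 1 / (Msq p m k - sq_gap p z))"
proof -
  have "(\<Sum>j<m. \<Sum>i<j. 1 / ((p i - p j)^2 - Msq p m k))
      = - (\<Sum>z\<in>pairs m. 1 / (Msq p m k - sq_gap p z))"
    unfolding sum_pairs sum_negf[symmetric]
    by (intro sum.cong) (auto simp: sq_gap_def power2_commute divide_simps)
  then show ?thesis
    by (simp add: inverse_eq_divide)
qed

context
  fixes p :: "nat \<Rightarrow> real" and m :: nat
  assumes incr: "strict_mono_on {..<m} p"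
begin

private lemma less_points: "i < j \<Longrightarrow> j < m \<Longrightarrow> p i < p j"
  using incr by (simp add: strict_mono_on_def)

private lemma mono_points: "i \<le> j \<Longrightarrow> j < m \<Longrightarrow> p i \<le> p j"
  using less_points by (fastforce simp: le_less)

lemma maxdist_eq_span:
  assumes "0 < m"
  shows "maxdist p m = p (m - 1) - p 0"
  unfolding maxdist_def
proof (rule Max_eqI)
  have "{\<bar>p i - p j\<bar> | i j. i < m \<and> j < m} = (\<lambda>(i, j). \<bar>p i - p j\<bar>) ` ({..<m} \<times> {..<m})"
    by auto
  then show "finite {\<bar>p i - p j\<bar> | i j. i < m \<and> j < m}"
    by simp
  show "y \<le> p (m - 1) - p 0" if y: "y \<in> {\<bar>p i - p j\<bar> | i j. i < m \<and> j < m}" for y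
  proof -
    obtain i j where ij: "i < m" "j < m" "y = \<bar>p i - p j\<bar>"
      using y by blast
    have "p 0 \<le> p i" "p 0 \<le> p j" "p i \<le> p (m - 1)" "p j \<le> p (m - 1)"
      using mono_points ij by auto
    then show ?thesis
      using ij by auto
  qed
  show "p (m - 1) - p 0 \<in> {\<bar>p i - p j\<bar> | i j. i < m \<and> j < m}"
    using assms mono_points[of 0 "m - 1"] by (intro CollectI exI[of _ "m - 1"] exI[of _ 0]) auto
qed

lemma sq_gap_le_span_sq:
  assumes "z \<in> pairs m"
  shows "sq_gap p z \<le> (p (m - 1) - p 0)^2"
proof -
  obtain j i where z: "z = (j, i)" "i < j" "j < m"
    using assms by (auto simp: pairs_def)
  then have "p 0 \<le> p i" "p i < p j" "p j \<le> p (m - 1)"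
    using mono_points less_points by auto
  then show ?thesis
    unfolding z sq_gap_def by (auto intro: power_mono)
qed

context
  assumes m: "3 \<le> m"
begin

private lemma span_pair: "(m - 1, 0) \<in> pairs m"
  and span_sq_gap: "sq_gap p (m - 1, 0) = (p (m - 1) - p 0)^2"
  and short_pair: "(1, 0) \<in> pairs m" "0 < sq_gap p (1, 0)"
    "sq_gap p (1, 0) < (p (m - 1) - p 0)^2"
  using m less_points[of 0 1] less_points[of 1 "m - 1"]
  by (auto simp: pairs_def sq_gap_def intro!: power_strict_mono)

private lemma span_lt_Msq_0: "(p (m - 1) - p 0)^2 < Msq p m 0"
proof -
  have "Msq p m 0 = sq_gap p (m - 1, 0) + (\<Sum>z\<in>pairs m - {(m - 1, 0)}. sq_gap p z)"
    unfolding Msq_0_eq using finite_pairs span_pair by (simp add: sum.remove)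
  moreover have "0 < (\<Sum>z\<in>pairs m - {(m - 1, 0)}. sq_gap p z)"
    using finite_pairs short_pair m
    by (intro sum_pos2[where i = "(1, 0)"]) (auto simp: sq_gap_def)
  ultimately show ?thesis
    using span_sq_gap by simp
qed

lemma Msq_step_bounds:
  assumes "(p (m - 1) - p 0)^2 < Msq p m k"
  shows "(p (m - 1) - p 0)^2 < Msq p m (Suc k)"
    and "(1 - (p (m - 1) - p 0)^2 / Msq p m k) / real (card (pairs m))
           < 1 - Msq p m (Suc k) / Msq p m k"
    and "1 - Msq p m (Suc k) / Msq p m k < 1 - (p (m - 1) - p 0)^2 / Msq p m k"
  using inverse_gap_step_bounds[OF finite_pairs sq_gap_le_span_sq span_pair span_sq_gap
      short_pair(1,3) zero_le_power2 assms]
  unfolding Msq_Suc_eq[symmetric] by simp_all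

lemma span_lt_Msq: "(p (m - 1) - p 0)^2 < Msq p m k"
  by (induction k) (rule span_lt_Msq_0, rule Msq_step_bounds(1))

end

end

theorem mainTheorem9:
  fixes p :: "nat \<Rightarrow> real" and m k :: nat
  assumes "m \<ge> 3"
    and "\<And>i j. i < j \<Longrightarrow> j < m \<Longrightarrow> p i < p j"
  shows "0 < 2 / (real m * (real m - 1)) * (1 - (maxdist p m)^2 / Msq p m k)
       \<and> 2 / (real m * (real m - 1)) * (1 - (maxdist p m)^2 / Msq p m k)
           < 1 - Msq p m (Suc k) / Msq p m k
       \<and> 1 - Msq p m (Suc k) / Msq p m k < 1 - (maxdist p m)^2 / Msq p m k"
proof -
  let ?D = "p (m - 1) - p 0" and ?x = "Msq p m k"
  have incr: "strict_mono_on {..<m} p"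
    using assms(2) by (simp add: strict_mono_on_def)
  have span: "?D^2 < ?x"
    using span_lt_Msq[OF incr assms(1)] .
  have "0 < ?x"
    using span zero_le_power2[of ?D] by linarith
  then have "0 < 1 - ?D^2 / ?x"
    using span by (simp add: divide_less_eq_1)
  moreover have "0 < real (card (pairs m))"
    using assms(1) by (simp add: real_card_pairs)
  moreover have "2 / (real m * (real m - 1)) = 1 / real (card (pairs m))"
    by (simp add: real_card_pairs)
  ultimately show ?thesis
    using Msq_step_bounds(2,3)[OF incr assms(1) span] maxdist_eq_span[OF incr] assms(1)
    by simp
qed

end
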